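(* Let $\mathcal{P}$ be a primitive collection of $\Sigma$, with $\sigma$, $c_{i,j}$ ($(i,j)\in\sigma(1)$) and $c_{i,0}$ as in the context, and define $d\in\mathbb{Z}^J$ by $$0=\sum_{(i,j)\in\mathcal{P}}\nu_{i,j}-\sum_{(i,j)\in\sigma(1)}c_{i,j}\nu_{i,j}-\sum_{i=1}^r c_{i,0}\nu_{i,0}=\sum_{(i,j)\in J}d_{i,j}\nu_{i,j}.$$ Then $d=\ell_{\mathrm{ext}}(\mathcal{P})$, the image of the primitive relation $\ell(\mathcal{P})$ under the isomorphism $L\cong L_{\mathrm{ext}}$. Moreover $\ell_{\mathrm{ext}}^+(\mathcal{P})$ is the indicator vector of $\mathcal{P}$ (entry $1$ at $(i,j)\in\mathcal{P}$, $0$ elsewhere, in particular $0$ at all $(i,0)$), and $\ell_{\mathrm{ext}}^-(\mathcal{P})$ has entries $c_{i,j}$ at $(i,j)\in\sigma(1)$, $c_{i,0}$ at $(i,0)$, and $0$ elsewhere.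
   Context: Let $N\cong\mathbb{Z}^n$, $M$ its dual. $X$ is a smooth projective toric variety with fan $\Sigma$ in $N_\mathbb{R}$ and nef-partition $\Sigma(1)=I_1\sqcup\cdots\sqcup I_r$ (each $E_i=\sum_{\rho\in I_i}D_\rho$ nef), $I_i=\{\rho_{i,1},\dots,\rho_{i,n_i}\}$, $p=\sum n_i$, $J=\{(i,j):1\le i\le r,0\le j\le n_i\}$, $I=\{(i,j):j\ge1\}$. $\nu_{i,j}=(\rho_{i,j},e_i)$ for $j\ge1$, $\nu_{i,0}=(0,e_i)$ in $N\times\mathbb{Z}^r$. $A_{\mathrm{ext}}:\mathbb{Z}^J\to N\times\mathbb{Z}^r$, $e_{i,j}\mapsto\nu_{i,j}$, $A:\mathbb{Z}^I\to N$, $e_{i,j}\mapsto\rho_{i,j}$; $L_{\mathrm{ext}}=\ker A_{\mathrm{ext}}$, $L=\ker A$, and forgetting the $(i,0)$-coordinates is an isomorphism $L_{\mathrm{ext}}\cong L$. For $\ell\in\mathbb{Z}^J$, $\ell=\ell^+-\ell^-$ with $\ell^\pm\ge0$ of disjoint supports. A primitive collection $\mathcal{P}\subset\Sigma(1)$ is a set not spanning a cone of $\Sigma$ all of whose proper subsets do; $\sigma$ is the unique cone of $\Sigma$ containing $\sum_{\mathcal{P}}\rho_{i,j}$ in its relative interior, $\sum_{\mathcal{P}}\rho_{i,j}=\sum_{\sigma(1)}c_{i,j}\rho_{i,j}$ with $c_{i,j}\in\mathbb{Z}_{>0}$, and the primitive relation $\ell(\mathcal{P})\in L$ is the coefficient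 vector of $\sum_{\mathcal{P}}\rho_{i,j}-\sum_{\sigma(1)}c_{i,j}\rho_{i,j}=0$. The integers $c_{i,0}$ are the unique integers with $\sum_{\mathcal{P}}\nu_{i,j}=\sum_{\sigma(1)}c_{i,j}\nu_{i,j}+\sum_i c_{i,0}\nu_{i,0}$. (It is known that $\mathcal{P}\cap\sigma(1)=\emptyset$ for smooth $X$.) *)

theory Defs
  imports "HOL-Analysis.Analysis"
begin

text \<open>The lattice N is int^'n. Rays are indexed by pairs (i,j), 1 <= i <= r,
  1 <= j <= n i, with primitive ray vector rho (i,j). A cone of the (simplicial) fan is
  recorded by the set of indices of its rays. Vectors in Z^J, Z^I are functions
  nat \<times> nat \<Rightarrow> int vanishing outside J (resp. I).\<close>

definition rv :: "int^'n \<Rightarrow> real^'n" where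
  "rv v = (\<chi> k. real_of_int (v $ k))"

definition Iset :: "nat \<Rightarrow> (nat \<Rightarrow> nat) \<Rightarrow> (nat \<times> nat) set" where
  "Iset r n = {(i,j). 1 \<le> i \<and> i \<le> r \<and> 1 \<le> j \<and> j \<le> n i}"

definition Jset :: "nat \<Rightarrow> (nat \<Rightarrow> nat) \<Rightarrow> (nat \<times> nat) set" where
  "Jset r n = {(i,j). 1 \<le> i \<and> i \<le> r \<and> j \<le> n i}"

definition Ipart :: "(nat \<Rightarrow> nat) \<Rightarrow> nat \<Rightarrow> (nat \<times> nat) set" where
  "Ipart n i = {(i,j) | j. 1 \<le> j \<and> j \<le> n i}"

definition cone_of :: "(nat \<times> nat \<Rightarrow> int^'n) \<Rightarrow> (nat \<times> nat) set \<Rightarrow> (real^'n) set" where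
  "cone_of \<rho> C = {(\<Sum>k\<in>C. a k *\<^sub>R rv (\<rho> k)) | a. \<forall>k\<in>C. 0 \<le> a k}"

text \<open>Smooth cone: its ray generators form part of a Z-basis of N
  (linearly independent and generating the saturated sublattice).\<close>
definition smooth_cone :: "(nat \<times> nat \<Rightarrow> int^'n) \<Rightarrow> (nat \<times> nat) set \<Rightarrow> bool" where
  "smooth_cone \<rho> C \<longleftrightarrow> finite C \<and> inj_on (\<lambda>k. rv (\<rho> k)) C
     \<and> independent ((\<lambda>k. rv (\<rho> k)) ` C)
     \<and> (\<forall>v::int^'n. rv v \<in> span ((\<lambda>k. rv (\<rho> k)) ` C) \<longrightarrow>
            (\<exists>a. v = (\<Sum>k\<in>C. a k *s \<rho> k)))"

definition smooth_complete_fan ::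
  "(nat \<times> nat \<Rightarrow> int^'n) \<Rightarrow> (nat \<times> nat) set set \<Rightarrow> (nat \<times> nat) set \<Rightarrow> bool" where
  "smooth_complete_fan \<rho> \<Sigma> R \<longleftrightarrow> finite \<Sigma>
     \<and> (\<forall>C\<in>\<Sigma>. C \<subseteq> R \<and> smooth_cone \<rho> C)
     \<and> (\<forall>C\<in>\<Sigma>. \<forall>D. D \<subseteq> C \<longrightarrow> D \<in> \<Sigma>)
     \<and> (\<forall>k\<in>R. {k} \<in> \<Sigma>)
     \<and> (\<forall>C\<in>\<Sigma>. \<forall>D\<in>\<Sigma>. cone_of \<rho> C \<inter> cone_of \<rho> D = cone_of \<rho> (C \<inter> D))
     \<and> (\<Union>C\<in>\<Sigma>. cone_of \<rho> C) = UNIV"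

definition maximal_cone :: "(nat \<times> nat) set set \<Rightarrow> (nat \<times> nat) set \<Rightarrow> bool" where
  "maximal_cone \<Sigma> C \<longleftrightarrow> C \<in> \<Sigma> \<and> (\<forall>D\<in>\<Sigma>. C \<subseteq> D \<longrightarrow> D = C)"

text \<open>Projectivity: existence of an ample torus-invariant divisor sum a_k D_k, i.e. a
  strictly convex support function.\<close>
definition projective_fan ::
  "(nat \<times> nat \<Rightarrow> int^'n) \<Rightarrow> (nat \<times> nat) set set \<Rightarrow> (nat \<times> nat) set \<Rightarrow> bool" where
  "projective_fan \<rho> \<Sigma> R \<longleftrightarrow> (\<exists>a :: nat \<times> nat \<Rightarrow> int. \<forall>C. maximal_cone \<Sigma> C \<longrightarrow>
      (\<exists>m :: real^'n. (\<forall>k\<in>C. m \<bullet> rv (\<rho> k) = - of_int (a k))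
                    \<and> (\<forall>k\<in>R - C. m \<bullet> rv (\<rho> k) > - of_int (a k))))"

text \<open>The divisor sum a_k D_k is nef (convex support function), CLS convention.\<close>
definition nef_divisor ::
  "(nat \<times> nat \<Rightarrow> int^'n) \<Rightarrow> (nat \<times> nat) set set \<Rightarrow> (nat \<times> nat) set \<Rightarrow> (nat \<times> nat \<Rightarrow> int) \<Rightarrow> bool" where
  "nef_divisor \<rho> \<Sigma> R a \<longleftrightarrow> (\<forall>C\<in>\<Sigma>.
      \<exists>m :: real^'n. (\<forall>k\<in>C. m \<bullet> rv (\<rho> k) = - of_int (a k))
                   \<and> (\<forall>k\<in>R. m \<bullet> rv (\<rho> k) \<ge> - of_int (a k)))"

definition nef_partition ::
  "(nat \<times> nat \<Rightarrow> int^'n) \<Rightarrow> (nat \<times> nat) set set \<Rightarrow> nat \<Rightarrow> (nat \<Rightarrow> nat) \<Rightarrow> bool" where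
  "nef_partition \<rho> \<Sigma> r n \<longleftrightarrow> (\<forall>i\<in>{1..r}.
      nef_divisor \<rho> \<Sigma> (Iset r n) (\<lambda>k. if k \<in> Ipart n i then 1 else 0))"

definition primitive_collection ::
  "(nat \<times> nat) set set \<Rightarrow> (nat \<times> nat) set \<Rightarrow> (nat \<times> nat) set \<Rightarrow> bool" where
  "primitive_collection \<Sigma> R P \<longleftrightarrow> P \<subseteq> R \<and> P \<notin> \<Sigma> \<and> (\<forall>Q. Q \<subset> P \<longrightarrow> Q \<in> \<Sigma>)"

text \<open>nu_{i,j} in N \<times> Z^r (Z^r as functions nat \<Rightarrow> int, e_i = indicator of i).\<close>
definition nuN :: "(nat \<times> nat \<Rightarrow> int^'n) \<Rightarrow> nat \<times> nat \<Rightarrow> int^'n" where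
  "nuN \<rho> k = (if snd k = 0 then 0 else \<rho> k)"

definition nuZ :: "nat \<times> nat \<Rightarrow> nat \<Rightarrow> int" where
  "nuZ k = (\<lambda>i. if i = fst k then 1 else 0)"

definition A_ext :: "(nat \<times> nat \<Rightarrow> int^'n) \<Rightarrow> nat \<Rightarrow> (nat \<Rightarrow> nat) \<Rightarrow> (nat \<times> nat \<Rightarrow> int)
      \<Rightarrow> (int^'n) \<times> (nat \<Rightarrow> int)" where
  "A_ext \<rho> r n x = ((\<Sum>k\<in>Jset r n. x k *s nuN \<rho> k), (\<lambda>i. \<Sum>k\<in>Jset r n. x k * nuZ k i))"

definition L_ext :: "(nat \<times> nat \<Rightarrow> int^'n) \<Rightarrow> nat \<Rightarrow> (nat \<Rightarrow> nat) \<Rightarrow> (nat \<times> nat \<Rightarrow> int) set" where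
  "L_ext \<rho> r n = {x. (\<forall>k. k \<notin> Jset r n \<longrightarrow> x k = 0) \<and> A_ext \<rho> r n x = (0, (\<lambda>_. 0))}"

definition A_map :: "(nat \<times> nat \<Rightarrow> int^'n) \<Rightarrow> nat \<Rightarrow> (nat \<Rightarrow> nat) \<Rightarrow> (nat \<times> nat \<Rightarrow> int) \<Rightarrow> int^'n" where
  "A_map \<rho> r n x = (\<Sum>k\<in>Iset r n. x k *s \<rho> k)"

definition L_lat :: "(nat \<times> nat \<Rightarrow> int^'n) \<Rightarrow> nat \<Rightarrow> (nat \<Rightarrow> nat) \<Rightarrow> (nat \<times> nat \<Rightarrow> int) set" where
  "L_lat \<rho> r n = {x. (\<forall>k. k \<notin> Iset r n \<longrightarrow> x k = 0) \<and> A_map \<rho> r n x = 0}"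

text \<open>Primitive relation: coefficient vector of sum_P rho - sum_sigma c rho = 0.\<close>
definition primitive_relation ::
  "(nat \<times> nat) set \<Rightarrow> (nat \<times> nat) set \<Rightarrow> (nat \<times> nat \<Rightarrow> int) \<Rightarrow> nat \<times> nat \<Rightarrow> int" where
  "primitive_relation P \<sigma> c = (\<lambda>k. (if k \<in> P then 1 else 0) - (if k \<in> \<sigma> then c k else 0))"

text \<open>Inverse of the isomorphism L_ext \<rightarrow> L forgetting the (i,0)-coordinates.\<close>
definition ext_of :: "(nat \<times> nat \<Rightarrow> int^'n) \<Rightarrow> nat \<Rightarrow> (nat \<Rightarrow> nat) \<Rightarrow> (nat \<times> nat \<Rightarrow> int)
      \<Rightarrow> nat \<times> nat \<Rightarrow> int" where
  "ext_of \<rho> r n l = (THE x. x \<in> L_ext \<rho> r n \<and> (\<forall>k\<in>Iset r n. x k = l k))"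

definition pos_part :: "('a \<Rightarrow> int) \<Rightarrow> 'a \<Rightarrow> int" where
  "pos_part l = (\<lambda>k. max (l k) 0)"

definition neg_part :: "('a \<Rightarrow> int) \<Rightarrow> 'a \<Rightarrow> int" where
  "neg_part l = (\<lambda>k. max (- l k) 0)"

end

theory Submission
  imports Defs
begin

text \<open>
Disjointness of \<open>P\<close> and \<open>\<sigma>(1)\<close>: if \<open>k\<^sub>0 \<in> P \<inter> \<sigma>(1)\<close>, then the sum of the rays of the cone
\<open>\<tau> = P - {k\<^sub>0}\<close> lies both in the relative interior of \<open>\<tau>\<close> and in \<open>\<sigma>\<close>, forcing \<open>\<tau> \<subseteq> \<sigma>(1)\<close> and hence
\<open>P \<subseteq> \<sigma>(1)\<close>, contradicting that \<open>P\<close> spans no cone. Nonnegativity of \<open>c\<^sub>i\<^sub>,\<^sub>0\<close>: the \<open>e\<^sub>i\<close>-component of the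
relation defining it reads \<open>c\<^sub>i\<^sub>,\<^sub>0 = |P \<inter> I\<^sub>i| - \<Sum>\<^bsub>\<sigma>(1) \<inter> I\<^sub>i\<^esub> c\<^sub>i\<^sub>,\<^sub>j\<close>, and evaluating the support function
of the nef divisor \<open>E\<^sub>i\<close> on both sides of \<open>\<Sum>\<^bsub>P\<^esub> \<rho> = \<Sum>\<^bsub>\<sigma>(1)\<^esub> c \<rho>\<close> shows this is \<open>\<ge> 0\<close>. Finally \<open>d\<close> lies in
\<open>L\<^sub>e\<^sub>x\<^sub>t\<close> and agrees with \<open>\<ell>(P)\<close> on \<open>I\<close>, and an element of \<open>L\<^sub>e\<^sub>x\<^sub>t\<close> is determined by its \<open>I\<close>-coordinates,
so \<open>d = \<ell>\<^sub>e\<^sub>x\<^sub>t(P)\<close>; its sign pattern is then read off from the two facts above.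
\<close>

lemma rv_sum: "rv (sum f A) = (\<Sum>x\<in>A. rv (f x))"
  by (simp add: rv_def vec_eq_iff)

lemma rv_add: "rv (u + v) = rv u + rv v"
  by (simp add: rv_def vec_eq_iff)

lemma rv_smult: "rv (a *s v) = of_int a *\<^sub>R rv v"
  by (simp add: rv_def vec_eq_iff)

lemma independent_image_coeff_eq_0:
  fixes f :: "'a \<Rightarrow> 'b::real_vector"
  assumes "finite C" "inj_on f C" "independent (f ` C)"
    and "(\<Sum>k\<in>C. u k *\<^sub>R f k) = 0" "k \<in> C"
  shows "u k = 0"
proof -
  have "(\<Sum>v\<in>f ` C. u (inv_into C f v) *\<^sub>R v) = 0"
    using assms(2,4) by (simp add: sum.reindex)
  then have "u (inv_into C f (f k)) = 0"
    using assms(1,3,5) dependent_finite[of "f ` C"] by auto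
  then show ?thesis using assms(2,5) by simp
qed

lemma finite_Jset: "finite (Jset r n)"
proof -
  have "Jset r n = (SIGMA i:{1..r}. {0..n i})" by (auto simp: Jset_def)
  then show ?thesis by simp
qed

lemma Iset_subset_Jset: "Iset r n \<subseteq> Jset r n"
  by (auto simp: Iset_def Jset_def)

subsection \<open>Cones of the fan\<close>

lemma sum_rays_mem_cone_of: "(\<Sum>k\<in>\<tau>. rv (\<rho> k)) \<in> cone_of \<rho> \<tau>"
  unfolding cone_of_def by (rule CollectI, rule exI[of _ "\<lambda>_. 1"]) simp

lemma fan_sum_rays_mem_cone_imp_subset:
  assumes fan: "smooth_complete_fan \<rho> \<Sigma> R"
    and "\<tau> \<in> \<Sigma>" "\<sigma> \<in> \<Sigma>"
    and mem: "(\<Sum>k\<in>\<tau>. rv (\<rho> k)) \<in> cone_of \<rho> \<sigma>"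
  shows "\<tau> \<subseteq> \<sigma>"
proof
  have smooth: "smooth_cone \<rho> \<tau>" and
    "cone_of \<rho> \<tau> \<inter> cone_of \<rho> \<sigma> = cone_of \<rho> (\<tau> \<inter> \<sigma>)"
    using fan assms(2,3) by (simp_all add: smooth_complete_fan_def)
  with mem sum_rays_mem_cone_of obtain b
    where b: "(\<Sum>k\<in>\<tau>. rv (\<rho> k)) = (\<Sum>k\<in>\<tau> \<inter> \<sigma>. b k *\<^sub>R rv (\<rho> k))"
    unfolding cone_of_def by blast
  have fin: "finite \<tau>" and inj: "inj_on (\<lambda>k. rv (\<rho> k)) \<tau>"
    and indep: "independent ((\<lambda>k. rv (\<rho> k)) ` \<tau>)"
    using smooth by (simp_all add: smooth_cone_def)
  have "(\<Sum>k\<in>\<tau>. (1 - (if k \<in> \<sigma> then b k else 0)) *\<^sub>R rv (\<rho> k))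
        = (\<Sum>k\<in>\<tau>. rv (\<rho> k)) - (\<Sum>k\<in>\<tau>. (if k \<in> \<sigma> then b k *\<^sub>R rv (\<rho> k) else 0))"
    by (simp add: scaleR_left_diff_distrib sum_subtractf if_distrib[of "\<lambda>x. x *\<^sub>R _"]
        cong: if_cong)
  also have "\<dots> = 0" using b fin by (simp add: sum.inter_restrict)
  finally have rel: "(\<Sum>k\<in>\<tau>. (1 - (if k \<in> \<sigma> then b k else 0)) *\<^sub>R rv (\<rho> k)) = 0" .
  fix k assume "k \<in> \<tau>"
  with fin inj indep rel have "1 - (if k \<in> \<sigma> then b k else 0) = (0::real)"
    by (rule independent_image_coeff_eq_0)
  then show "k \<in> \<sigma>" by (auto split: if_splits)
qed

lemma primitive_collection_disjoint_cone:
  assumes fan: "smooth_complete_fan \<rho> \<Sigma> R"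
    and prim: "primitive_collection \<Sigma> R P"
    and sigma: "\<sigma> \<in> \<Sigma>"
    and cpos: "\<forall>k\<in>\<sigma>. c k > 0"
    and crel: "(\<Sum>k\<in>P. \<rho> k) = (\<Sum>k\<in>\<sigma>. c k *s \<rho> k)"
  shows "P \<inter> \<sigma> = {}"
proof (rule ccontr)
  assume "P \<inter> \<sigma> \<noteq> {}"
  then obtain k0 where k0: "k0 \<in> P" "k0 \<in> \<sigma>" by blast
  define \<tau> where "\<tau> = P - {k0}"
  have \<tau>: "\<tau> \<in> \<Sigma>" and "P \<notin> \<Sigma>"
    using prim k0 unfolding primitive_collection_def \<tau>_def by blast+
  have finP: "finite P"
    using \<tau> fan k0 by (auto simp: \<tau>_def smooth_complete_fan_def smooth_cone_def)
  have fin\<sigma>: "finite \<sigma>"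
    using sigma fan by (simp add: smooth_complete_fan_def smooth_cone_def)
  have "rv (\<rho> k0) + (\<Sum>k\<in>\<tau>. rv (\<rho> k)) = (\<Sum>k\<in>\<sigma>. of_int (c k) *\<^sub>R rv (\<rho> k))"
    using arg_cong[OF crel, of rv] sum.remove[OF finP k0(1), of \<rho>]
    by (simp add: rv_add rv_sum rv_smult \<tau>_def)
  moreover have "rv (\<rho> k0) = (\<Sum>k\<in>\<sigma>. (if k = k0 then 1 else 0) *\<^sub>R rv (\<rho> k))"
    using k0 fin\<sigma> by (simp add: if_distrib[of "\<lambda>x. x *\<^sub>R _"] sum.delta' cong: if_cong)
  ultimately have "(\<Sum>k\<in>\<tau>. rv (\<rho> k))
      = (\<Sum>k\<in>\<sigma>. of_int (c k) *\<^sub>R rv (\<rho> k)) - (\<Sum>k\<in>\<sigma>. (if k = k0 then 1 else 0) *\<^sub>R rv (\<rho> k))"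
    by (metis add_diff_cancel_left')
  also have "\<dots> = (\<Sum>k\<in>\<sigma>. (of_int (c k) - (if k = k0 then 1 else 0)) *\<^sub>R rv (\<rho> k))"
    by (simp add: sum_subtractf scaleR_left_diff_distrib)
  finally have "(\<Sum>k\<in>\<tau>. rv (\<rho> k))
      = (\<Sum>k\<in>\<sigma>. (of_int (c k) - (if k = k0 then 1 else 0)) *\<^sub>R rv (\<rho> k))" .
  moreover have "\<forall>k\<in>\<sigma>. 0 \<le> (of_int (c k) - (if k = k0 then 1 else 0) :: real)"
    using cpos by force
  ultimately have "(\<Sum>k\<in>\<tau>. rv (\<rho> k)) \<in> cone_of \<rho> \<sigma>"
    unfolding cone_of_def
    by (intro CollectI exI[of _ "\<lambda>k. of_int (c k) - (if k = k0 then 1 else 0)"]) simp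
  with fan \<tau> sigma have "\<tau> \<subseteq> \<sigma>" by (rule fan_sum_rays_mem_cone_imp_subset)
  then have "P \<subseteq> \<sigma>" using k0 unfolding \<tau>_def by blast
  then have "P \<in> \<Sigma>" using fan sigma unfolding smooth_complete_fan_def by blast
  with \<open>P \<notin> \<Sigma>\<close> show False by blast
qed

lemma nef_divisor_sum_le:
  fixes \<rho> :: "nat \<times> nat \<Rightarrow> int^'n"
  assumes nef: "nef_divisor \<rho> \<Sigma> R a"
    and "\<sigma> \<in> \<Sigma>" "P \<subseteq> R"
    and crel: "(\<Sum>k\<in>P. \<rho> k) = (\<Sum>k\<in>\<sigma>. c k *s \<rho> k)"
  shows "(\<Sum>k\<in>\<sigma>. c k * a k) \<le> (\<Sum>k\<in>P. a k)"
proof -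
  obtain m :: "real^'n" where on_cone: "\<forall>k\<in>\<sigma>. m \<bullet> rv (\<rho> k) = - of_int (a k)"
    and above: "\<forall>k\<in>R. m \<bullet> rv (\<rho> k) \<ge> - of_int (a k)"
    using nef \<open>\<sigma> \<in> \<Sigma>\<close> unfolding nef_divisor_def by blast
  have "- of_int (\<Sum>k\<in>\<sigma>. c k * a k) = (\<Sum>k\<in>\<sigma>. of_int (c k) * (m \<bullet> rv (\<rho> k)))"
    using on_cone by (simp add: sum_negf flip: sum_distrib_left)
  also have "\<dots> = m \<bullet> rv (\<Sum>k\<in>P. \<rho> k)"
    by (simp add: crel rv_sum rv_smult inner_sum_right)
  also have "\<dots> = (\<Sum>k\<in>P. m \<bullet> rv (\<rho> k))"
    by (simp add: rv_sum inner_sum_right)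
  also have "\<dots> \<ge> (\<Sum>k\<in>P. - of_int (a k))"
    using above \<open>P \<subseteq> R\<close> by (intro sum_mono) blast
  finally have "of_int (\<Sum>k\<in>\<sigma>. c k * a k) \<le> (of_int (\<Sum>k\<in>P. a k) :: real)"
    by (simp add: sum_negf)
  then show ?thesis by (simp only: of_int_le_iff)
qed

subsection \<open>The extended lattice\<close>

lemma A_ext_add:
  "A_ext \<rho> r n (\<lambda>k. x k + y k) =
     (fst (A_ext \<rho> r n x) + fst (A_ext \<rho> r n y), \<lambda>i. snd (A_ext \<rho> r n x) i + snd (A_ext \<rho> r n y) i)"
  unfolding A_ext_def by (simp add: sum.distrib distrib_right vec_eq_iff)

lemma A_ext_diff:
  "A_ext \<rho> r n (\<lambda>k. x k - y k) =
     (fst (A_ext \<rho> r n x) - fst (A_ext \<rho> r n y), \<lambda>i. snd (A_ext \<rho> r n x) i - snd (A_ext \<rho> r n y) i)"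
  unfolding A_ext_def by (simp add: sum_subtractf left_diff_distrib vec_eq_iff)

lemma snd_A_ext:
  assumes "i \<in> {1..r}"
  shows "snd (A_ext \<rho> r n x) i = (\<Sum>j\<le>n i. x (i, j))"
proof -
  have "snd (A_ext \<rho> r n x) i = (\<Sum>k\<in>Jset r n. if k \<in> {i} \<times> {..n i} then x k else 0)"
    by (auto simp: A_ext_def nuZ_def Jset_def intro!: sum.cong)
  also have "\<dots> = (\<Sum>k\<in>Jset r n \<inter> {i} \<times> {..n i}. x k)"
    by (simp add: sum.inter_restrict finite_Jset)
  also have "Jset r n \<inter> {i} \<times> {..n i} = {i} \<times> {..n i}"
    using assms by (auto simp: Jset_def)
  also have "{i} \<times> {..n i} = Pair i ` {..n i}" by blast
  also have "(\<Sum>k\<in>Pair i ` {..n i}. x k) = (\<Sum>j\<le>n i. x (i, j))"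
    by (simp add: sum.reindex inj_on_def)
  finally show ?thesis .
qed

lemma snd_A_ext_supported_Iset:
  assumes "S \<subseteq> Iset r n" "i \<in> {1..r}"
  shows "snd (A_ext \<rho> r n (\<lambda>k. if k \<in> S then f k else 0)) i
       = (\<Sum>k\<in>S. if k \<in> Ipart n i then f k else 0)"
proof -
  have "snd (A_ext \<rho> r n (\<lambda>k. if k \<in> S then f k else 0)) i
      = (\<Sum>j\<in>{..n i} \<inter> {j. (i, j) \<in> S}. f (i, j))"
    using assms(2) by (simp add: snd_A_ext sum.inter_restrict)
  also have "\<dots> = (\<Sum>k\<in>Pair i ` ({..n i} \<inter> {j. (i, j) \<in> S}). f k)"
    by (simp add: sum.reindex inj_on_def)
  also have "Pair i ` ({..n i} \<inter> {j. (i, j) \<in> S}) = S \<inter> Ipart n i"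
    using assms(1) by (auto simp: Iset_def Ipart_def)
  also have "(\<Sum>k\<in>S \<inter> Ipart n i. f k) = (\<Sum>k\<in>S. if k \<in> Ipart n i then f k else 0)"
    using assms(1) finite_subset[OF _ finite_Jset] Iset_subset_Jset
    by (subst sum.inter_restrict) blast+
  finally show ?thesis .
qed

lemma snd_A_ext_zero_index:
  assumes "i \<in> {1..r}"
  shows "snd (A_ext \<rho> r n (\<lambda>k. if snd k = 0 \<and> fst k \<in> {1..r} then g (fst k) else 0)) i = g i"
  using assms by (simp add: snd_A_ext sum.delta)

lemma L_ext_zero_index_eq:
  assumes "x \<in> L_ext \<rho> r n" "i \<in> {1..r}"
  shows "x (i, 0) = - (\<Sum>j\<in>{1..n i}. x (i, j))"
proof -
  have "0 = (\<Sum>j\<le>n i. x (i, j))"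
    using assms snd_A_ext[of i r \<rho> n x] by (auto simp: L_ext_def)
  also have "\<dots> = x (i, 0) + (\<Sum>j\<in>{1..n i}. x (i, j))"
    by (simp add: atMost_atLeast0 sum.atLeast_Suc_atMost)
  finally show ?thesis by simp
qed

lemma L_ext_vanishes_outside_Jset:
  assumes "x \<in> L_ext \<rho> r n" "k \<notin> Jset r n"
  shows "x k = 0"
  using assms unfolding L_ext_def mem_Collect_eq by blast

lemma L_ext_eq_if_eq_on_Iset:
  assumes x: "x \<in> L_ext \<rho> r n" and y: "y \<in> L_ext \<rho> r n"
    and agree: "\<forall>k\<in>Iset r n. x k = y k"
  shows "x = y"
proof
  fix k :: "nat \<times> nat"
  obtain i j where k: "k = (i, j)" by (cases k)
  consider "k \<notin> Jset r n" | "k \<in> Iset r n" | "i \<in> {1..r}" "j = 0"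
    unfolding k Jset_def Iset_def by fastforce
  then show "x k = y k"
  proof cases
    case 1
    then show ?thesis using x y by (simp add: L_ext_vanishes_outside_Jset)
  next
    case 2
    then show ?thesis using agree by blast
  next
    case 3
    have "x (i, 0) = - (\<Sum>j\<in>{1..n i}. x (i, j))"
      using x 3(1) by (rule L_ext_zero_index_eq)
    also have "(\<Sum>j\<in>{1..n i}. x (i, j)) = (\<Sum>j\<in>{1..n i}. y (i, j))"
      using agree 3(1) by (intro sum.cong) (auto simp: Iset_def)
    also have "- (\<Sum>j\<in>{1..n i}. y (i, j)) = y (i, 0)"
      using L_ext_zero_index_eq[OF y 3(1)] by simp
    finally show ?thesis using k 3(2) by simp
  qed
qed

lemma ext_of_eqI:
  assumes "x \<in> L_ext \<rho> r n" "\<forall>k\<in>Iset r n. x k = l k"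
  shows "ext_of \<rho> r n l = x"
  unfolding ext_of_def
proof (rule the_equality)
  show "x \<in> L_ext \<rho> r n \<and> (\<forall>k\<in>Iset r n. x k = l k)" using assms by blast
  fix y assume "y \<in> L_ext \<rho> r n \<and> (\<forall>k\<in>Iset r n. y k = l k)"
  then show "y = x" using assms by (intro L_ext_eq_if_eq_on_Iset) auto
qed

subsection \<open>Primitive relations\<close>

lemma primitive_c0_nonneg:
  assumes fan: "smooth_complete_fan \<rho> \<Sigma> (Iset r n)"
    and nef: "nef_partition \<rho> \<Sigma> r n"
    and prim: "primitive_collection \<Sigma> (Iset r n) P"
    and sigma: "\<sigma> \<in> \<Sigma>"
    and crel: "(\<Sum>k\<in>P. \<rho> k) = (\<Sum>k\<in>\<sigma>. c k *s \<rho> k)"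
    and c0rel: "A_ext \<rho> r n (\<lambda>k. if k \<in> P then 1 else 0)
              = A_ext \<rho> r n (\<lambda>k. (if k \<in> \<sigma> then c k else 0)
                     + (if snd k = 0 \<and> fst k \<in> {1..r} then c0 (fst k) else 0))"
    and i: "i \<in> {1..r}"
  shows "c0 i \<ge> 0"
proof -
  define a where "a = (\<lambda>k. if k \<in> Ipart n i then 1 else 0 :: int)"
  have PI: "P \<subseteq> Iset r n" using prim by (simp add: primitive_collection_def)
  have \<sigma>I: "\<sigma> \<subseteq> Iset r n" using fan sigma by (simp add: smooth_complete_fan_def)
  have "snd (A_ext \<rho> r n (\<lambda>k. if k \<in> P then 1 else 0)) i
      = snd (A_ext \<rho> r n (\<lambda>k. if k \<in> \<sigma> then c k else 0)) i
        + snd (A_ext \<rho> r n (\<lambda>k. if snd k = 0 \<and> fst k \<in> {1..r} then c0 (fst k) else 0)) i"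
    using c0rel by (simp add: A_ext_add)
  then have "(\<Sum>k\<in>P. a k) = (\<Sum>k\<in>\<sigma>. if k \<in> Ipart n i then c k else 0) + c0 i"
    unfolding snd_A_ext_supported_Iset[OF PI i] snd_A_ext_supported_Iset[OF \<sigma>I i]
      snd_A_ext_zero_index[OF i] a_def .
  also have "(\<Sum>k\<in>\<sigma>. if k \<in> Ipart n i then c k else 0) = (\<Sum>k\<in>\<sigma>. c k * a k)"
    by (intro sum.cong) (simp_all add: a_def)
  finally have "(\<Sum>k\<in>P. a k) = (\<Sum>k\<in>\<sigma>. c k * a k) + c0 i" .
  moreover have "nef_divisor \<rho> \<Sigma> (Iset r n) a"
    using nef i unfolding nef_partition_def a_def by blast
  then have "(\<Sum>k\<in>\<sigma>. c k * a k) \<le> (\<Sum>k\<in>P. a k)"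
    using sigma PI crel by (rule nef_divisor_sum_le)
  ultimately show ?thesis by linarith
qed

definition ext_relation ::
    "(nat \<times> nat) set \<Rightarrow> (nat \<times> nat) set \<Rightarrow> (nat \<times> nat \<Rightarrow> int) \<Rightarrow> (nat \<Rightarrow> int) \<Rightarrow> nat
      \<Rightarrow> nat \<times> nat \<Rightarrow> int" where
  "ext_relation P \<sigma> c c0 r = (\<lambda>k. (if k \<in> P then 1 else 0) - (if k \<in> \<sigma> then c k else 0)
     - (if snd k = 0 \<and> fst k \<in> {1..r} then c0 (fst k) else 0))"

lemma ext_relation_mem_L_ext:
  assumes "P \<subseteq> Iset r n" "\<sigma> \<subseteq> Iset r n"
    and c0rel: "A_ext \<rho> r n (\<lambda>k. if k \<in> P then 1 else 0)
              = A_ext \<rho> r n (\<lambda>k. (if k \<in> \<sigma> then c k else 0)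
                     + (if snd k = 0 \<and> fst k \<in> {1..r} then c0 (fst k) else 0))"
  shows "ext_relation P \<sigma> c c0 r \<in> L_ext \<rho> r n"
proof -
  have as_difference: "ext_relation P \<sigma> c c0 r = (\<lambda>k. (if k \<in> P then 1 else 0) - ((if k \<in> \<sigma> then c k else 0)
                     + (if snd k = 0 \<and> fst k \<in> {1..r} then c0 (fst k) else 0)))"
    by (simp add: ext_relation_def fun_eq_iff)
  have "A_ext \<rho> r n (ext_relation P \<sigma> c c0 r) = (0, \<lambda>_. 0)"
    unfolding as_difference A_ext_diff c0rel by simp
  moreover have "ext_relation P \<sigma> c c0 r k = 0" if "k \<notin> Jset r n" for k
  proof -
    have "k \<notin> P" "k \<notin> \<sigma>" using that assms(1,2) Iset_subset_Jset by blast+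
    moreover have "\<not> (snd k = 0 \<and> fst k \<in> {1..r})" using that by (cases k) (auto simp: Jset_def)
    ultimately show ?thesis unfolding ext_relation_def by presburger
  qed
  ultimately show ?thesis by (simp add: L_ext_def)
qed

lemma ext_of_primitive_relation:
  assumes "P \<subseteq> Iset r n" "\<sigma> \<subseteq> Iset r n"
    and c0rel: "A_ext \<rho> r n (\<lambda>k. if k \<in> P then 1 else 0)
              = A_ext \<rho> r n (\<lambda>k. (if k \<in> \<sigma> then c k else 0)
                     + (if snd k = 0 \<and> fst k \<in> {1..r} then c0 (fst k) else 0))"
  shows "ext_of \<rho> r n (primitive_relation P \<sigma> c) = ext_relation P \<sigma> c c0 r"
proof (rule ext_of_eqI)
  show "ext_relation P \<sigma> c c0 r \<in> L_ext \<rho> r n"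
    using assms by (rule ext_relation_mem_L_ext)
  show "\<forall>k\<in>Iset r n. ext_relation P \<sigma> c c0 r k = primitive_relation P \<sigma> c k"
    by (auto simp: ext_relation_def primitive_relation_def Iset_def)
qed

lemma ext_relation_sign_pattern:
  assumes "P \<subseteq> Iset r n" "\<sigma> \<subseteq> Iset r n" "P \<inter> \<sigma> = {}"
    and cpos: "\<forall>k\<in>\<sigma>. c k > 0" and c0nn: "\<forall>i\<in>{1..r}. c0 i \<ge> 0"
    and k: "k \<in> Jset r n"
  shows "pos_part (ext_relation P \<sigma> c c0 r) k = (if k \<in> P then 1 else 0)
    \<and> neg_part (ext_relation P \<sigma> c c0 r) k
        = (if k \<in> \<sigma> then c k else if snd k = 0 then c0 (fst k) else 0)"
proof -
  consider "k \<in> P" | "k \<in> \<sigma>" | "k \<notin> P" "k \<notin> \<sigma>" by blast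
  then show ?thesis
  proof cases
    case 1
    then have "k \<notin> \<sigma>" "snd k \<noteq> 0" using assms(1,3) by (auto simp: Iset_def)
    with 1 show ?thesis by (simp add: ext_relation_def pos_part_def neg_part_def)
  next
    case 2
    then have "k \<notin> P" "snd k \<noteq> 0" "c k > 0" using assms(2,3) cpos by (auto simp: Iset_def)
    with 2 show ?thesis by (simp add: ext_relation_def pos_part_def neg_part_def)
  next
    case 3
    have "fst k \<in> {1..r}" using k by (auto simp: Jset_def)
    with 3 c0nn show ?thesis by (simp add: ext_relation_def pos_part_def neg_part_def)
  qed
qed

theorem mainTheorem3:
  fixes \<rho> :: "nat \<times> nat \<Rightarrow> int^'n"
    and \<Sigma> :: "(nat \<times> nat) set set"
    and r :: nat and n :: "nat \<Rightarrow> nat"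
    and P \<sigma> :: "(nat \<times> nat) set"
    and c :: "nat \<times> nat \<Rightarrow> int" and c0 :: "nat \<Rightarrow> int"
  assumes fan: "smooth_complete_fan \<rho> \<Sigma> (Iset r n)"
    and proj: "projective_fan \<rho> \<Sigma> (Iset r n)"
    and nef: "nef_partition \<rho> \<Sigma> r n"
    and prim: "primitive_collection \<Sigma> (Iset r n) P"
    and sigma: "\<sigma> \<in> \<Sigma>"
    and cpos: "\<forall>k\<in>\<sigma>. c k > 0"
    and crel: "(\<Sum>k\<in>P. \<rho> k) = (\<Sum>k\<in>\<sigma>. c k *s \<rho> k)"
    and c0rel: "A_ext \<rho> r n (\<lambda>k. if k \<in> P then 1 else 0)
              = A_ext \<rho> r n (\<lambda>k. (if k \<in> \<sigma> then c k else 0)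
                     + (if snd k = 0 \<and> fst k \<in> {1..r} then c0 (fst k) else 0))"
  shows "(let d = (\<lambda>k. (if k \<in> P then 1 else 0) - (if k \<in> \<sigma> then c k else 0)
                     - (if snd k = 0 \<and> fst k \<in> {1..r} then c0 (fst k) else 0));
              le = ext_of \<rho> r n (primitive_relation P \<sigma> c)
          in d = le
           \<and> (\<forall>k\<in>Jset r n. pos_part le k = (if k \<in> P then 1 else 0))
           \<and> (\<forall>k\<in>Jset r n. neg_part le k =
                (if k \<in> \<sigma> then c k else if snd k = 0 then c0 (fst k) else 0)))"
proof -
  have PI: "P \<subseteq> Iset r n" using prim by (simp add: primitive_collection_def)
  have \<sigma>I: "\<sigma> \<subseteq> Iset r n" using fan sigma by (simp add: smooth_complete_fan_def)
  have disj: "P \<inter> \<sigma> = {}"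
    using fan prim sigma cpos crel by (rule primitive_collection_disjoint_cone)
  have c0nn: "\<forall>i\<in>{1..r}. c0 i \<ge> 0"
    using primitive_c0_nonneg[OF fan nef prim sigma crel c0rel] by blast
  have le: "ext_of \<rho> r n (primitive_relation P \<sigma> c) = ext_relation P \<sigma> c c0 r"
    using PI \<sigma>I c0rel by (rule ext_of_primitive_relation)
  show ?thesis
    unfolding Let_def le ext_relation_def[symmetric]
    using ext_relation_sign_pattern[OF PI \<sigma>I disj cpos c0nn] by blast
qed

end
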